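(* Under the Setting, Algorithm and Strong convexity assumption in the context (with $a_k\in(0,1]$, $A_k>0$), suppose $$\min_{\{\mathcal A\subset I:\,|\mathcal A|=\lceil (N-s+1)/2\rceil\}}\sum_{k\in\mathcal A}\rho_k\eta_k>\frac{(1-a_s)D_{\mathcal X}^2}{A_s}+\frac12\sum_{k\in\mathcal B}\rho_k\gamma_kL_f^2+\frac12\sum_{k\in\mathcal N}\rho_k\gamma_kL_{g,\mathcal X}^2,$$ and let $\bar x_{N,s}=\sum_{k\in\mathcal B}\rho_kx_k/\sum_{k\in\mathcal B}\rho_k$. Then $$f(\bar x_{N,s})-f(x^* )\le\frac{2(1-a_s)D_{\mathcal X}^2/A_s+\sum_{k\in\mathcal B}\rho_k\gamma_kL_f^2+\sum_{k\in\mathcal N}\rho_k\gamma_kL_{g,\mathcal X}^2}{2\min_{\{\mathcal A\subset I:|\mathcal A|=\lceil(N-s+1)/2\rceil\}}\sum_{k\in\mathcal A}\rho_k}$$ and $$G(\bar x_{N,s})\le\frac{\sum_{k\in\mathcal B}\rho_k(\eta_k+\varepsilon_k)}{\sum_{k\in\mathcal B}\rho_k}.$$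
   Context: Setting. $\mathcal X\subset\mathbb R^n$ is convex and compact; $f:\mathcal X\to\mathbb R$ is convex and $L_f$-Lipschitz; $\Delta\subset\mathbb R^d$ is compact; $g:\mathcal X\times\Delta\to\mathbb R$ is such that for every $\delta\in\Delta$, $x\mapsto g(x,\delta)$ is convex and $L_{g,\mathcal X}$-Lipschitz, and for every $x\in\mathcal X$, $\delta\mapsto g(x,\delta)$ is $L_{g,\Delta}$-Lipschitz. Let $G(x):=\max_{\delta\in\Delta}g(x,\delta)$ and assume the problem $\min_{x\in\mathcal X}\{f(x):G(x)\le0\}$ has an optimal solution $x^*$. Norms are Euclidean. $f'(x)$ denotes a subgradient of $f$ at $x$ and $g'(x,\delta)$ a subgradient of $g(\cdot,\delta)$ at $x$. Let $\omega_{\mathcal X}:\mathcal X\to\mathbb R$ be continuously differentiable and $1$-strongly convex; $V(x,z):=\omega_{\mathcal X}(z)-\omega_{\mathcal X}(x)-\langle\nabla\omega_{\mathcal X}(x),z-x\rangle$; prox-mapping $P_{x,\mathcal X}(y):=\arg\min_{z\in\mathcal X}\{\langle y,z\rangle+V(x,z)\}$; $D_{\mathcal X}:=\sqrt{\max_{x,z\in\mathcal X}V(x,z)}$. Algorithm (inexact CSA). Inputs: $N\ge1$, $x_1\in\mathcal X$, tolerances $\eta_k>0$, step-sizes $\gamma_k>0$. For $k=1,\dots,N$: choose some $\delta_k\in\Delta$ (an approximate maximizer of $g(x_k,\cdot)$); set $h_k=f'(x_k)$ if $g(x_k,\delta_k)\le\eta_k$ and $h_k=g'(x_k,\delta_k)$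 otherwise; set $x_{k+1}=P_{x_k,\mathcal X}(\gamma_kh_k)$. For $1\le s\le N$ let $I=\{s,\dots,N\}$, $\mathcal B:=\{k\in I: g(x_k,\delta_k)\le\eta_k\}$, $\mathcal N:=I\setminus\mathcal B$. The cut-generation errors are $\varepsilon_k:=G(x_k)-g(x_k,\delta_k)\ge0$. Strong convexity assumption: $f$ is strongly convex with parameter $\mu_f>0$ (i.e. $f(x)\ge f(z)+\langle f'(z),x-z\rangle+\frac{\mu_f}{2}\|x-z\|^2$), each $g(\cdot,\delta)$ is strongly convex with parameter $\mu_g>0$ uniformly in $\delta$, and there is $L>0$ with $V(x,z)\le\frac L2\|x-z\|^2$ for all $x,z\in\mathcal X$. Define $a_k=\mu_f\gamma_k/L$ if $g(x_k,\delta_k)\le\eta_k$ and $a_k=\mu_g\gamma_k/L$ otherwise; $A_1=1$, $A_k=(1-a_k)A_{k-1}$ for $k\ge2$; $\rho_k=\gamma_k/A_k$. *)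

theory Defs
  imports "HOL-Analysis.Analysis"
begin

definition is_subgrad :: "('a::real_inner \<Rightarrow> real) \<Rightarrow> 'a set \<Rightarrow> 'a \<Rightarrow> 'a \<Rightarrow> bool" where
  "is_subgrad h X x v \<longleftrightarrow> (\<forall>z\<in>X. h z \<ge> h x + v \<bullet> (z - x))"

definition strongly_convex_on :: "real \<Rightarrow> 'a::real_normed_vector set \<Rightarrow> ('a \<Rightarrow> real) \<Rightarrow> bool" where
  "strongly_convex_on mu X h \<longleftrightarrow>
     (\<forall>x\<in>X. \<forall>y\<in>X. \<forall>t::real. 0 \<le> t \<and> t \<le> 1 \<longrightarrow>
        h ((1 - t) *\<^sub>R x + t *\<^sub>R y) \<le> (1 - t) * h x + t * h y - mu / 2 * t * (1 - t) * (norm (x - y))\<^sup>2)"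

definition bregman :: "('a::real_inner \<Rightarrow> real) \<Rightarrow> ('a \<Rightarrow> 'a) \<Rightarrow> 'a \<Rightarrow> 'a \<Rightarrow> real" where
  "bregman \<omega> d\<omega> x z = \<omega> z - \<omega> x - d\<omega> x \<bullet> (z - x)"

definition prox :: "('a::real_inner \<Rightarrow> real) \<Rightarrow> ('a \<Rightarrow> 'a) \<Rightarrow> 'a set \<Rightarrow> 'a \<Rightarrow> 'a \<Rightarrow> 'a" where
  "prox \<omega> d\<omega> X x y = arg_min_on (\<lambda>z. y \<bullet> z + bregman \<omega> d\<omega> x z) X"

definition DX :: "('a::real_inner \<Rightarrow> real) \<Rightarrow> ('a \<Rightarrow> 'a) \<Rightarrow> 'a set \<Rightarrow> real" where
  "DX \<omega> d\<omega> X = sqrt (SUP p\<in>X \<times> X. bregman \<omega> d\<omega> (fst p) (snd p))"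

definition Gmax :: "('a \<Rightarrow> 'b \<Rightarrow> real) \<Rightarrow> 'b set \<Rightarrow> 'a \<Rightarrow> real" where
  "Gmax g \<Delta> x = (SUP \<delta>\<in>\<Delta>. g x \<delta>)"

definition min_subset_sum :: "nat set \<Rightarrow> nat \<Rightarrow> (nat \<Rightarrow> real) \<Rightarrow> real" where
  "min_subset_sum I m w = Min {(\<Sum>k\<in>A. w k) | A. A \<subseteq> I \<and> card A = m}"

end

theory Submission
  imports Defs
begin

text \<open>A prox-step along a subgradient h of a \<mu>-strongly convex function \<phi> yields
  \<gamma>(\<phi>(x) - \<phi>(u)) \<le> (1 - \<mu>\<gamma>/L) V(x,u) - V(x',u) + \<gamma>^2 \<parallel>h\<parallel>^2 / 2, and dividing the k-th
  of these inequalities (with u = x*) by A k makes the Bregman terms telescope. On a cut step,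
  feasibility of x* gives g(x*,\<delta> k) \<le> 0 < \<eta> k < g(x k,\<delta> k), so each cut contributes at least
  \<rho> k \<eta> k. The hypothesis therefore forces at least half of the indices in {s..N} to be productive,
  so the total weight of the productive steps is at least the minimal subset sum, and Jensen's
  inequality for f and for the convex function G bounds the weighted average of the productive
  iterates.\<close>

lemma difference_quotient_tendsto_along_segment:
  fixes F :: "'a::real_inner \<Rightarrow> real"
  assumes X: "convex X" and x: "x \<in> X" and z: "z \<in> X"
    and der: "\<And>y. y \<in> X \<Longrightarrow> (F has_derivative (\<lambda>h. d y \<bullet> h)) (at y within X)"
  shows "((\<lambda>t. (F (x + t *\<^sub>R (z - x)) - F x) / t) \<longlongrightarrow> d x \<bullet> (z - x)) (at_right 0)"
proof -
  have path: "((\<lambda>t::real. x + t *\<^sub>R (z - x)) has_derivative (\<lambda>t. t *\<^sub>R (z - x))) (at 0 within {0..1})"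
    by (auto intro!: derivative_eq_intros)
  have "(\<lambda>t::real. x + t *\<^sub>R (z - x)) ` {0..1} \<subseteq> X"
  proof clarify
    fix t :: real assume "t \<in> {0..1}"
    then have "(1 - t) *\<^sub>R x + t *\<^sub>R z \<in> X" using X x z by (simp add: convex_alt)
    then show "x + t *\<^sub>R (z - x) \<in> X" by (simp add: algebra_simps)
  qed
  from has_derivative_in_compose2[OF der this _ path]
  have "((\<lambda>t. F (x + t *\<^sub>R (z - x))) has_derivative (\<lambda>t. (d x \<bullet> (z - x)) * t)) (at 0 within {0..1})"
    by (simp add: mult.commute)
  then have "((\<lambda>t. F (x + t *\<^sub>R (z - x))) has_field_derivative d x \<bullet> (z - x)) (at 0 within {0..1})"
    by (simp add: has_field_derivative_def)
  then show ?thesis by (simp add: has_field_derivative_iff at_within_Icc_at_right)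
qed

lemma bregman_ge_half_sq_dist:
  fixes \<omega> :: "'a::real_inner \<Rightarrow> real"
  assumes X: "convex X" and x: "x \<in> X" and z: "z \<in> X"
    and der: "\<And>y. y \<in> X \<Longrightarrow> (\<omega> has_derivative (\<lambda>h. d\<omega> y \<bullet> h)) (at y within X)"
    and sc: "strongly_convex_on 1 X \<omega>"
  shows "1/2 * (norm (z - x))\<^sup>2 \<le> bregman \<omega> d\<omega> x z"
proof -
  let ?q = "\<lambda>t. \<omega> z - \<omega> x - 1/2 * (1 - t) * (norm (z - x))\<^sup>2"
  have "\<forall>\<^sub>F t in at_right 0. (\<omega> (x + t *\<^sub>R (z - x)) - \<omega> x) / t \<le> ?q t"
    unfolding eventually_at_right_field
  proof (intro exI[of _ 1] conjI allI impI)
    fix t :: real assume t: "0 < t" "t < 1"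
    have "\<omega> ((1 - t) *\<^sub>R x + t *\<^sub>R z) \<le> (1 - t) * \<omega> x + t * \<omega> z - 1/2 * t * (1 - t) * (norm (x - z))\<^sup>2"
      using sc x z t unfolding strongly_convex_on_def by auto
    then have "\<omega> (x + t *\<^sub>R (z - x)) - \<omega> x \<le> t * ?q t"
      by (simp add: algebra_simps norm_minus_commute)
    then show "(\<omega> (x + t *\<^sub>R (z - x)) - \<omega> x) / t \<le> ?q t"
      using t by (simp add: divide_le_eq mult.commute)
  qed simp
  moreover have "(?q \<longlongrightarrow> ?q 0) (at_right 0)" by (intro tendsto_intros)
  ultimately have "d\<omega> x \<bullet> (z - x) \<le> ?q 0"
    using difference_quotient_tendsto_along_segment[OF X x z der] by (intro tendsto_le) auto
  then show ?thesis unfolding bregman_def by simp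
qed

lemma
  fixes \<omega> :: "'a::real_inner \<Rightarrow> real"
  assumes X: "compact X" and x: "x \<in> X"
    and der: "\<And>y. y \<in> X \<Longrightarrow> (\<omega> has_derivative (\<lambda>h. d\<omega> y \<bullet> h)) (at y within X)"
  shows prox_in: "prox \<omega> d\<omega> X x y \<in> X"
    and prox_minimal: "u \<in> X \<Longrightarrow>
      y \<bullet> prox \<omega> d\<omega> X x y + bregman \<omega> d\<omega> x (prox \<omega> d\<omega> X x y) \<le> y \<bullet> u + bregman \<omega> d\<omega> x u"
proof -
  let ?\<phi> = "\<lambda>z. y \<bullet> z + bregman \<omega> d\<omega> x z"
  have "continuous_on X \<omega>"
    using der has_derivative_continuous continuous_on_eq_continuous_within by blast
  then have "continuous_on X ?\<phi>" unfolding bregman_def by (intro continuous_intros)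
  then obtain p where "p \<in> X" "\<And>u. u \<in> X \<Longrightarrow> ?\<phi> p \<le> ?\<phi> u"
    using continuous_attains_inf[OF X] x by blast
  then have "is_arg_min ?\<phi> (\<lambda>z. z \<in> X) p" unfolding is_arg_min_def by (auto simp: not_less)
  then have "is_arg_min ?\<phi> (\<lambda>z. z \<in> X) (prox \<omega> d\<omega> X x y)"
    unfolding prox_def arg_min_on_def arg_min_def by (rule someI)
  then show "prox \<omega> d\<omega> X x y \<in> X" "u \<in> X \<Longrightarrow> ?\<phi> (prox \<omega> d\<omega> X x y) \<le> ?\<phi> u"
    unfolding is_arg_min_def by (auto simp: not_less)
qed

text \<open>The first-order optimality condition of the prox-step, rewritten with the three-point
  identity of Bregman distances.\<close>
lemma prox_three_point:
  fixes \<omega> :: "'a::real_inner \<Rightarrow> real" and y :: 'a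
  assumes X: "convex X" "compact X" and x: "x \<in> X" and u: "u \<in> X"
    and der: "\<And>y. y \<in> X \<Longrightarrow> (\<omega> has_derivative (\<lambda>h. d\<omega> y \<bullet> h)) (at y within X)"
  defines "p \<equiv> prox \<omega> d\<omega> X x y"
  shows "y \<bullet> (p - u) \<le> bregman \<omega> d\<omega> x u - bregman \<omega> d\<omega> p u - bregman \<omega> d\<omega> x p"
proof -
  have p: "p \<in> X" unfolding p_def by (rule prox_in[OF X(2) x der])
  let ?c = "y \<bullet> (u - p) - d\<omega> x \<bullet> (u - p)"
  have "\<forall>\<^sub>F t in at_right 0. 0 \<le> ?c + (\<omega> (p + t *\<^sub>R (u - p)) - \<omega> p) / t"
    unfolding eventually_at_right_field
  proof (intro exI[of _ 1] conjI allI impI)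
    fix t :: real assume t: "0 < t" "t < 1"
    have "(1 - t) *\<^sub>R p + t *\<^sub>R u \<in> X" using X(1) p u t by (simp add: convex_alt)
    then have "p + t *\<^sub>R (u - p) \<in> X" by (simp add: algebra_simps)
    from prox_minimal[OF X(2) x der this, of y, folded p_def]
    have "0 \<le> t * ?c + (\<omega> (p + t *\<^sub>R (u - p)) - \<omega> p)"
      unfolding bregman_def by (simp add: inner_add_right algebra_simps)
    then show "0 \<le> ?c + (\<omega> (p + t *\<^sub>R (u - p)) - \<omega> p) / t"
      using t by (simp add: field_simps)
  qed simp
  moreover have "((\<lambda>t. ?c + (\<omega> (p + t *\<^sub>R (u - p)) - \<omega> p) / t) \<longlongrightarrow> ?c + d\<omega> p \<bullet> (u - p)) (at_right 0)"
    by (intro tendsto_intros difference_quotient_tendsto_along_segment[OF X(1) p u der])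
  ultimately have "0 \<le> ?c + d\<omega> p \<bullet> (u - p)"
    by (intro tendsto_lowerbound) auto
  then show ?thesis unfolding bregman_def by (simp add: algebra_simps)
qed

lemma prox_descent:
  fixes \<omega> :: "'a::real_inner \<Rightarrow> real"
  assumes X: "convex X" "compact X" and x: "x \<in> X" and u: "u \<in> X"
    and der: "\<And>y. y \<in> X \<Longrightarrow> (\<omega> has_derivative (\<lambda>h. d\<omega> y \<bullet> h)) (at y within X)"
    and sc: "strongly_convex_on 1 X \<omega>"
  shows "y \<bullet> (x - u) \<le> bregman \<omega> d\<omega> x u - bregman \<omega> d\<omega> (prox \<omega> d\<omega> X x y) u + 1/2 * (norm y)\<^sup>2"
proof -
  define p where "p = prox \<omega> d\<omega> X x y"
  have p: "p \<in> X" unfolding p_def by (rule prox_in[OF X(2) x der])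
  have "y \<bullet> (x - p) \<le> norm y * norm (p - x)"
    using norm_cauchy_schwarz[of y "x - p"] by (simp add: norm_minus_commute)
  also have "\<dots> \<le> 1/2 * (norm y)\<^sup>2 + 1/2 * (norm (p - x))\<^sup>2"
    using sum_squares_bound[of "norm y" "norm (p - x)"] by (simp add: algebra_simps power2_eq_square)
  finally have "y \<bullet> (x - p) \<le> 1/2 * (norm y)\<^sup>2 + 1/2 * (norm (p - x))\<^sup>2" .
  moreover have "y \<bullet> (x - u) = y \<bullet> (x - p) + y \<bullet> (p - u)" by (simp add: inner_diff_right)
  ultimately show ?thesis
    using prox_three_point[OF X x u der, of y] bregman_ge_half_sq_dist[OF X(1) x p der sc]
    unfolding p_def by linarith
qed

lemma prox_iterates_in:
  fixes \<omega> :: "'a::real_inner \<Rightarrow> real"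
  assumes X: "compact X" and x1: "x 1 \<in> X"
    and der: "\<And>y. y \<in> X \<Longrightarrow> (\<omega> has_derivative (\<lambda>h. d\<omega> y \<bullet> h)) (at y within X)"
    and step: "\<And>k. k \<in> {1..N} \<Longrightarrow> x (Suc k) = prox \<omega> d\<omega> X (x k) (y k)"
  shows "k \<in> {1..Suc N} \<Longrightarrow> x k \<in> X"
proof (induction k)
  case (Suc k)
  show ?case
  proof (cases "k = 0")
    case False
    with Suc have "k \<in> {1..N}" "x k \<in> X" by auto
    then show ?thesis using step prox_in[OF X _ der] by simp
  qed (use x1 in simp)
qed simp

lemma prox_step_strongly_convex:
  fixes \<omega> :: "'a::real_inner \<Rightarrow> real"
  assumes X: "convex X" "compact X" and x: "x \<in> X" and u: "u \<in> X"
    and der: "\<And>y. y \<in> X \<Longrightarrow> (\<omega> has_derivative (\<lambda>h. d\<omega> y \<bullet> h)) (at y within X)"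
    and sc: "strongly_convex_on 1 X \<omega>"
    and \<gamma>: "0 < \<gamma>" and \<mu>: "0 \<le> \<mu>" and L: "0 < L"
    and lower: "\<phi> x + h \<bullet> (u - x) + \<mu> / 2 * (norm (u - x))\<^sup>2 \<le> \<phi> u"
    and h: "norm h \<le> M"
    and V: "bregman \<omega> d\<omega> x u \<le> L / 2 * (norm (x - u))\<^sup>2"
  shows "\<gamma> * (\<phi> x - \<phi> u) \<le> (1 - \<mu> * \<gamma> / L) * bregman \<omega> d\<omega> x u
           - bregman \<omega> d\<omega> (prox \<omega> d\<omega> X x (\<gamma> *\<^sub>R h)) u + \<gamma>\<^sup>2 / 2 * M\<^sup>2"
proof -
  have "(norm (\<gamma> *\<^sub>R h))\<^sup>2 \<le> \<gamma>\<^sup>2 * M\<^sup>2"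
    using \<gamma> h by (simp add: power_mult_distrib power_mono)
  then have descent: "\<gamma> * (h \<bullet> (x - u)) \<le> bregman \<omega> d\<omega> x u
      - bregman \<omega> d\<omega> (prox \<omega> d\<omega> X x (\<gamma> *\<^sub>R h)) u + \<gamma>\<^sup>2 / 2 * M\<^sup>2"
    using prox_descent[OF X x u der sc, of "\<gamma> *\<^sub>R h"] by simp
  have "\<mu> * \<gamma> / L * bregman \<omega> d\<omega> x u \<le> \<mu> * \<gamma> / L * (L / 2 * (norm (x - u))\<^sup>2)"
    using V \<mu> \<gamma> L by (intro mult_left_mono) auto
  also have "\<dots> = \<gamma> * (\<mu> / 2 * (norm (u - x))\<^sup>2)"
    using L by (simp add: norm_minus_commute)
  finally have "\<mu> * \<gamma> / L * bregman \<omega> d\<omega> x u \<le> \<gamma> * (\<phi> u - \<phi> x - h \<bullet> (u - x))"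
    using lower \<gamma> by (smt (verit) mult_left_mono)
  with descent show ?thesis by (simp add: algebra_simps inner_diff_right)
qed

text \<open>Dividing the one-step inequalities by A k makes the Bregman terms telescope,
  since (1 - a k) / A k = 1 / A (k - 1).\<close>
lemma weighted_descent_sum:
  fixes \<gamma> T a A V c :: "nat \<Rightarrow> real"
  assumes "s \<le> n"
    and step: "\<And>k. k \<in> {s..n} \<Longrightarrow> \<gamma> k * T k \<le> (1 - a k) * V k - V (Suc k) + c k"
    and A_rec: "\<And>k. k \<in> {Suc s..n} \<Longrightarrow> A k = A (k - 1) * (1 - a k)"
    and A_pos: "\<And>k. k \<in> {s..n} \<Longrightarrow> 0 < A k"
    and V_nonneg: "0 \<le> V (Suc n)"
  shows "(\<Sum>k=s..n. \<gamma> k / A k * T k) \<le> (1 - a s) * V s / A s + (\<Sum>k=s..n. c k / A k)"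
proof -
  have step': "\<gamma> k / A k * T k \<le> (1 - a k) * V k / A k - V (Suc k) / A k + c k / A k"
    if "k \<in> {s..n}" for k
    using divide_right_mono[OF step[OF that] less_imp_le[OF A_pos[OF that]]]
    by (simp only: add_divide_distrib diff_divide_distrib times_divide_eq_left)
  have "(\<Sum>k=s..n. \<gamma> k / A k * T k)
        \<le> (1 - a s) * V s / A s - V (Suc n) / A n + (\<Sum>k=s..n. c k / A k)"
    using \<open>s \<le> n\<close> A_rec A_pos step'
  proof (induction n rule: dec_induct)
    case base
    then show ?case by simp
  next
    case (step n)
    have "A (Suc n) = A n * (1 - a (Suc n))" "0 < A (Suc n)"
      using step.prems(1,2)[of "Suc n"] step.hyps by auto
    then have "(1 - a (Suc n)) * V (Suc n) / A (Suc n) = V (Suc n) / A n" by auto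
    moreover have "(\<Sum>k=s..n. \<gamma> k / A k * T k)
        \<le> (1 - a s) * V s / A s - V (Suc n) / A n + (\<Sum>k=s..n. c k / A k)"
      using step by simp
    ultimately show ?case using step.prems(3)[of "Suc n"] step.hyps by simp
  qed
  moreover have "0 \<le> V (Suc n) / A n" using V_nonneg A_pos[of n] \<open>s \<le> n\<close> by simp
  ultimately show ?thesis by linarith
qed

lemma bregman_le_DX_sq:
  fixes \<omega> :: "'a::real_inner \<Rightarrow> real"
  assumes X: "compact X" and x: "x \<in> X" and z: "z \<in> X"
    and quad: "\<And>y z. y \<in> X \<Longrightarrow> z \<in> X \<Longrightarrow> bregman \<omega> d\<omega> y z \<le> C * (norm (y - z))\<^sup>2"
  shows "bregman \<omega> d\<omega> x z \<le> (DX \<omega> d\<omega> X)\<^sup>2"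
proof -
  let ?S = "SUP p\<in>X \<times> X. bregman \<omega> d\<omega> (fst p) (snd p)"
  obtain R where R: "\<And>y. y \<in> X \<Longrightarrow> norm y \<le> R"
    using compact_imp_bounded[OF X] unfolding bounded_iff by blast
  have "bregman \<omega> d\<omega> y w \<le> \<bar>C\<bar> * (2 * R)\<^sup>2" if "y \<in> X" "w \<in> X" for y w
  proof -
    have "norm (y - w) \<le> 2 * R" using R[OF that(1)] R[OF that(2)] norm_triangle_ineq4[of y w] by linarith
    then have "\<bar>C\<bar> * (norm (y - w))\<^sup>2 \<le> \<bar>C\<bar> * (2 * R)\<^sup>2"
      by (intro mult_left_mono power_mono) auto
    moreover have "C * (norm (y - w))\<^sup>2 \<le> \<bar>C\<bar> * (norm (y - w))\<^sup>2"
      by (intro mult_right_mono) auto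
    ultimately show ?thesis using quad[OF that] by linarith
  qed
  then have bdd: "bdd_above ((\<lambda>p. bregman \<omega> d\<omega> (fst p) (snd p)) ` (X \<times> X))"
    by (intro bdd_aboveI2) auto
  have le: "bregman \<omega> d\<omega> y w \<le> ?S" if "y \<in> X" "w \<in> X" for y w
    using cSUP_upper[OF _ bdd, of "(y, w)"] that by simp
  have "0 \<le> ?S" using le[OF x x] by (simp add: bregman_def)
  then show ?thesis using le[OF x z] by (simp add: DX_def)
qed

lemma Gmax_upper:
  assumes "compact \<Delta>" "continuous_on \<Delta> (g y)" "d \<in> \<Delta>"
  shows "g y d \<le> Gmax g \<Delta> y"
  unfolding Gmax_def using assms
  by (intro cSUP_upper bounded_imp_bdd_above compact_imp_bounded compact_continuous_image)

lemma convex_on_Gmax: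
  assumes "convex X" "compact \<Delta>" "\<Delta> \<noteq> {}"
    and cont: "\<And>y. y \<in> X \<Longrightarrow> continuous_on \<Delta> (g y)"
    and conv: "\<And>d. d \<in> \<Delta> \<Longrightarrow> convex_on X (\<lambda>y. g y d)"
  shows "convex_on X (Gmax g \<Delta>)"
proof
  fix t :: real and y z assume t: "0 < t" "t < 1" and yz: "y \<in> X" "z \<in> X"
  show "Gmax g \<Delta> ((1 - t) *\<^sub>R y + t *\<^sub>R z) \<le> (1 - t) * Gmax g \<Delta> y + t * Gmax g \<Delta> z"
    unfolding Gmax_def[of g \<Delta> "(1 - t) *\<^sub>R y + t *\<^sub>R z"]
  proof (rule cSUP_least[OF \<open>\<Delta> \<noteq> {}\<close>])
    fix d assume d: "d \<in> \<Delta>"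
    have "g ((1 - t) *\<^sub>R y + t *\<^sub>R z) d \<le> (1 - t) * g y d + t * g z d"
      using convex_onD[OF conv[OF d]] t yz by simp
    also have "\<dots> \<le> (1 - t) * Gmax g \<Delta> y + t * Gmax g \<Delta> z"
      using t Gmax_upper[OF \<open>compact \<Delta>\<close> cont d] yz
      by (intro add_mono mult_left_mono) auto
    finally show "g ((1 - t) *\<^sub>R y + t *\<^sub>R z) d \<le> (1 - t) * Gmax g \<Delta> y + t * Gmax g \<Delta> z" .
  qed
qed (rule \<open>convex X\<close>)

lemma convex_on_weighted_mean:
  fixes x :: "nat \<Rightarrow> 'a::real_vector"
  assumes "convex_on X f" "finite B" "B \<noteq> {}"
    and \<rho>: "\<And>k. k \<in> B \<Longrightarrow> 0 < \<rho> k" and x: "\<And>k. k \<in> B \<Longrightarrow> x k \<in> X"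
  shows "f ((1 / (\<Sum>k\<in>B. \<rho> k)) *\<^sub>R (\<Sum>k\<in>B. \<rho> k *\<^sub>R x k)) \<le> (\<Sum>k\<in>B. \<rho> k * f (x k)) / (\<Sum>k\<in>B. \<rho> k)"
proof -
  define W where "W = (\<Sum>k\<in>B. \<rho> k)"
  have W: "0 < W" unfolding W_def using assms by (intro sum_pos) auto
  have "f (\<Sum>k\<in>B. (\<rho> k / W) *\<^sub>R x k) \<le> (\<Sum>k\<in>B. \<rho> k / W * f (x k))"
    using W \<rho> x by (intro convex_on_sum[OF assms(2,3,1)])
      (auto simp: W_def sum_divide_distrib[symmetric] less_imp_le)
  then show ?thesis
    by (simp add: W_def[symmetric] scaleR_sum_right sum_divide_distrib)
qed

lemma finite_subset_sums:
  "finite I \<Longrightarrow> finite {(\<Sum>k\<in>A. w k) | A. A \<subseteq> I \<and> card A = m}"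
  by (rule finite_subset[of _ "(\<lambda>A. \<Sum>k\<in>A. w k) ` Pow I"]) auto

lemma min_subset_sum_le:
  assumes "finite I" "A \<subseteq> I" "card A = m"
  shows "min_subset_sum I m w \<le> (\<Sum>k\<in>A. w k)"
  unfolding min_subset_sum_def using assms finite_subset_sums[OF assms(1)] by (intro Min_le) auto

lemma min_subset_sum_pos:
  assumes "finite I" "1 \<le> m" "m \<le> card I" "\<And>k. k \<in> I \<Longrightarrow> 0 < w k"
  shows "0 < min_subset_sum I m w"
proof -
  obtain T where "T \<subseteq> I" "card T = m" using obtain_subset_with_card_n[OF assms(3)] by blast
  then have "min_subset_sum I m w \<in> {(\<Sum>k\<in>A. w k) | A. A \<subseteq> I \<and> card A = m}"
    unfolding min_subset_sum_def by (intro Min_in finite_subset_sums[OF assms(1)]) auto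
  then obtain A where "A \<subseteq> I" "card A = m" "min_subset_sum I m w = (\<Sum>k\<in>A. w k)" by blast
  moreover have "finite A" "A \<noteq> {}" using \<open>card A = m\<close> \<open>1 \<le> m\<close> by (auto intro: card_ge_0_finite)
  ultimately show ?thesis using assms(4) by (auto intro!: sum_pos)
qed

lemma nat_ceiling_half:
  assumes "1 \<le> n"
  shows "1 \<le> nat \<lceil>real n / 2\<rceil>" "2 * nat \<lceil>real n / 2\<rceil> \<le> n + 1"
proof -
  have "\<lceil>real n / 2\<rceil> = int ((n + 1) div 2)"
    by (rule ceiling_unique) linarith+
  then show "1 \<le> nat \<lceil>real n / 2\<rceil>" "2 * nat \<lceil>real n / 2\<rceil> \<le> n + 1" using assms by auto
qed

lemma weighted_average_bound:
  fixes \<rho> \<eta> u :: "nat \<Rightarrow> real"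
  assumes I: "finite I" and B: "B \<subseteq> I"
    and m: "1 \<le> m" "2 * m \<le> card I + 1"
    and \<rho>: "\<And>k. k \<in> I \<Longrightarrow> 0 < \<rho> k" and \<eta>: "\<And>k. k \<in> I \<Longrightarrow> 0 < \<eta> k"
    and R: "0 \<le> R" "R < min_subset_sum I m (\<lambda>k. \<rho> k * \<eta> k)"
    and sum: "(\<Sum>k\<in>B. \<rho> k * u k) + (\<Sum>k\<in>I - B. \<rho> k * \<eta> k) \<le> R"
  shows "B \<noteq> {}" and "(\<Sum>k\<in>B. \<rho> k * u k) / (\<Sum>k\<in>B. \<rho> k) \<le> R / min_subset_sum I m \<rho>"
proof -
  let ?S = "\<Sum>k\<in>B. \<rho> k * u k"
  have finB: "finite B" using I B finite_subset by blast
  have cut_nonneg: "0 \<le> (\<Sum>k\<in>I - B. \<rho> k * \<eta> k)"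
    using \<rho> \<eta> by (intro sum_nonneg) (simp add: less_imp_le)
  text \<open>If B has fewer than m elements, then I - B has at least m, and its contribution alone
    exceeds R.\<close>
  have many_productive: "?S < 0 \<or> m \<le> card B"
  proof (rule disjCI)
    assume "\<not> m \<le> card B"
    then have "m \<le> card (I - B)" using card_Diff_subset[OF finB B] card_mono[OF I B] m by linarith
    then obtain C where C: "C \<subseteq> I - B" "card C = m" using obtain_subset_with_card_n by blast
    have "min_subset_sum I m (\<lambda>k. \<rho> k * \<eta> k) \<le> (\<Sum>k\<in>C. \<rho> k * \<eta> k)"
      using C by (intro min_subset_sum_le[OF I]) auto
    also have "\<dots> \<le> (\<Sum>k\<in>I - B. \<rho> k * \<eta> k)"
      using C I \<rho> \<eta> by (intro sum_mono2) (auto simp: less_imp_le)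
    finally show "?S < 0" using sum R by linarith
  qed
  show "B \<noteq> {}"
  proof
    assume "B = {}"
    then show False using many_productive m by simp
  qed
  then have W_pos: "0 < (\<Sum>k\<in>B. \<rho> k)" using finB B \<rho> by (intro sum_pos) auto
  have min_pos: "0 < min_subset_sum I m \<rho>"
    using m card_mono[OF I B] by (intro min_subset_sum_pos[OF I _ _ \<rho>]) auto
  show "?S / (\<Sum>k\<in>B. \<rho> k) \<le> R / min_subset_sum I m \<rho>"
  proof (cases "?S \<le> 0")
    case True
    then have "?S / (\<Sum>k\<in>B. \<rho> k) \<le> 0" using W_pos by (simp add: divide_nonpos_pos)
    also have "0 \<le> R / min_subset_sum I m \<rho>" using R min_pos by simp
    finally show ?thesis .
  next
    case False
    with many_productive have "m \<le> card B" by linarith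
    then obtain C where C: "C \<subseteq> B" "card C = m" using obtain_subset_with_card_n by blast
    have "min_subset_sum I m \<rho> \<le> (\<Sum>k\<in>C. \<rho> k)"
      using C B by (intro min_subset_sum_le[OF I]) auto
    also have "\<dots> \<le> (\<Sum>k\<in>B. \<rho> k)"
      using C finB B \<rho> by (intro sum_mono2) (auto simp: less_imp_le)
    finally have "?S / (\<Sum>k\<in>B. \<rho> k) \<le> ?S / min_subset_sum I m \<rho>"
      using False min_pos by (intro divide_left_mono) auto
    also have "\<dots> \<le> R / min_subset_sum I m \<rho>"
      using sum cut_nonneg min_pos by (intro divide_right_mono) auto
    finally show ?thesis .
  qed
qed

locale inexact_csa =
  fixes X :: "'a::real_inner set" and \<Delta> :: "'b::topological_space set"
    and f :: "'a \<Rightarrow> real" and g :: "'a \<Rightarrow> 'b \<Rightarrow> real"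
    and f' :: "'a \<Rightarrow> 'a" and g' :: "'a \<Rightarrow> 'b \<Rightarrow> 'a"
    and Lf LgX :: real and \<omega> :: "'a \<Rightarrow> real" and d\<omega> :: "'a \<Rightarrow> 'a" and xstar :: 'a
    and N :: nat and x :: "nat \<Rightarrow> 'a" and \<delta> :: "nat \<Rightarrow> 'b" and \<eta> \<gamma> :: "nat \<Rightarrow> real"
    and \<mu>f \<mu>g L :: real
  assumes X_convex: "convex X" and X_compact: "compact X" and f_convex: "convex_on X f"
    and \<Delta>_compact: "compact \<Delta>"
    and g_convex: "\<And>d. d \<in> \<Delta> \<Longrightarrow> convex_on X (\<lambda>y. g y d)"
    and g_cont: "\<And>y. y \<in> X \<Longrightarrow> continuous_on \<Delta> (g y)"
    and f'_bound: "\<And>y. y \<in> X \<Longrightarrow> norm (f' y) \<le> Lf"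
    and g'_bound: "\<And>y d. y \<in> X \<Longrightarrow> d \<in> \<Delta> \<Longrightarrow> norm (g' y d) \<le> LgX"
    and xstar_in: "xstar \<in> X" and xstar_feasible: "Gmax g \<Delta> xstar \<le> 0"
    and \<omega>_deriv: "\<And>y. y \<in> X \<Longrightarrow> (\<omega> has_derivative (\<lambda>h. d\<omega> y \<bullet> h)) (at y within X)"
    and \<omega>_sc: "strongly_convex_on 1 X \<omega>"
    and \<mu>f_pos: "0 < \<mu>f" and \<mu>g_pos: "0 < \<mu>g" and L_pos: "0 < L"
    and f_sc: "\<And>y z. y \<in> X \<Longrightarrow> z \<in> X \<Longrightarrow> f z + f' z \<bullet> (y - z) + \<mu>f / 2 * (norm (y - z))\<^sup>2 \<le> f y"
    and g_sc: "\<And>y z d. y \<in> X \<Longrightarrow> z \<in> X \<Longrightarrow> d \<in> \<Delta> \<Longrightarrow>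
                 g z d + g' z d \<bullet> (y - z) + \<mu>g / 2 * (norm (y - z))\<^sup>2 \<le> g y d"
    and V_bound: "\<And>y z. y \<in> X \<Longrightarrow> z \<in> X \<Longrightarrow> bregman \<omega> d\<omega> y z \<le> L / 2 * (norm (y - z))\<^sup>2"
    and N_pos: "1 \<le> N" and x1: "x 1 \<in> X"
    and \<delta>_in: "\<And>k. k \<in> {1..N} \<Longrightarrow> \<delta> k \<in> \<Delta>"
    and \<eta>_pos: "\<And>k. k \<in> {1..N} \<Longrightarrow> 0 < \<eta> k"
    and \<gamma>_pos: "\<And>k. k \<in> {1..N} \<Longrightarrow> 0 < \<gamma> k"
    and step: "\<And>k. k \<in> {1..N} \<Longrightarrow>
       x (Suc k) = prox \<omega> d\<omega> X (x k)
         (\<gamma> k *\<^sub>R (if g (x k) (\<delta> k) \<le> \<eta> k then f' (x k) else g' (x k) (\<delta> k)))"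
begin

definition productive :: "nat \<Rightarrow> bool" where
  "productive k \<longleftrightarrow> g (x k) (\<delta> k) \<le> \<eta> k"

definition a :: "nat \<Rightarrow> real" where
  "a k = (if productive k then \<mu>f * \<gamma> k / L else \<mu>g * \<gamma> k / L)"

definition A :: "nat \<Rightarrow> real" where
  "A k = (\<Prod>j\<in>{2..k}. 1 - a j)"

definition \<rho> :: "nat \<Rightarrow> real" where
  "\<rho> k = \<gamma> k / A k"

definition gap :: "nat \<Rightarrow> real" where
  "gap k = (if productive k then f (x k) - f xstar else g (x k) (\<delta> k) - g xstar (\<delta> k))"

definition subgrad_bound :: "nat \<Rightarrow> real" where
  "subgrad_bound k = (if productive k then Lf else LgX)"

lemma iterate_in: "k \<in> {1..Suc N} \<Longrightarrow> x k \<in> X"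
  by (rule prox_iterates_in[OF X_compact x1 \<omega>_deriv step])

lemma cut_at_xstar:
  assumes "d \<in> \<Delta>"
  shows "g xstar d \<le> 0"
proof -
  have "g xstar d \<le> Gmax g \<Delta> xstar"
    by (rule Gmax_upper[where g = g and y = xstar, OF \<Delta>_compact g_cont[OF xstar_in] assms])
  with xstar_feasible show ?thesis by simp
qed

lemma one_step:
  assumes k: "k \<in> {1..N}"
  shows "\<gamma> k * gap k \<le> (1 - a k) * bregman \<omega> d\<omega> (x k) xstar - bregman \<omega> d\<omega> (x (Suc k)) xstar
           + (\<gamma> k)\<^sup>2 / 2 * (subgrad_bound k)\<^sup>2"
proof -
  have xk: "x k \<in> X" and dk: "\<delta> k \<in> \<Delta>" using k iterate_in \<delta>_in by auto
  note step_bound = prox_step_strongly_convex[OF X_convex X_compact xk xstar_in \<omega>_deriv \<omega>_sc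
      \<gamma>_pos[OF k] _ L_pos _ _ V_bound[OF xk xstar_in]]
  show ?thesis
  proof (cases "productive k")
    case True
    have "\<gamma> k * (f (x k) - f xstar) \<le> (1 - \<mu>f * \<gamma> k / L) * bregman \<omega> d\<omega> (x k) xstar
        - bregman \<omega> d\<omega> (prox \<omega> d\<omega> X (x k) (\<gamma> k *\<^sub>R f' (x k))) xstar + (\<gamma> k)\<^sup>2 / 2 * Lf\<^sup>2"
      using \<mu>f_pos f_sc[OF xstar_in xk] f'_bound[OF xk] by (intro step_bound) auto
    with True show ?thesis
      unfolding gap_def subgrad_bound_def a_def step[OF k] productive_def by simp
  next
    case False
    have "\<gamma> k * (g (x k) (\<delta> k) - g xstar (\<delta> k)) \<le> (1 - \<mu>g * \<gamma> k / L) * bregman \<omega> d\<omega> (x k) xstar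
        - bregman \<omega> d\<omega> (prox \<omega> d\<omega> X (x k) (\<gamma> k *\<^sub>R g' (x k) (\<delta> k))) xstar + (\<gamma> k)\<^sup>2 / 2 * LgX\<^sup>2"
      using \<mu>g_pos g_sc[OF xstar_in xk dk] g'_bound[OF xk dk]
      by (intro step_bound[where \<phi> = "\<lambda>y. g y (\<delta> k)"]) auto
    with False show ?thesis
      unfolding gap_def subgrad_bound_def a_def step[OF k] productive_def by simp
  qed
qed

lemma weighted_gap_sum_le:
  assumes s: "1 \<le> s" "s \<le> N"
    and A_pos: "\<And>k. k \<in> {1..N} \<Longrightarrow> 0 < A k" and a_le_1: "\<And>k. k \<in> {1..N} \<Longrightarrow> a k \<le> 1"
  shows "(\<Sum>k=s..N. \<rho> k * gap k)
           \<le> (1 - a s) * (DX \<omega> d\<omega> X)\<^sup>2 / A s + (\<Sum>k=s..N. 1/2 * (\<rho> k * \<gamma> k * (subgrad_bound k)\<^sup>2))"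
proof -
  have "(\<Sum>k=s..N. \<rho> k * gap k) \<le> (1 - a s) * bregman \<omega> d\<omega> (x s) xstar / A s
      + (\<Sum>k=s..N. (\<gamma> k)\<^sup>2 / 2 * (subgrad_bound k)\<^sup>2 / A k)"
    unfolding \<rho>_def
  proof (rule weighted_descent_sum[OF s(2)])
    show "k \<in> {s..N} \<Longrightarrow> \<gamma> k * gap k \<le> (1 - a k) * bregman \<omega> d\<omega> (x k) xstar
        - bregman \<omega> d\<omega> (x (Suc k)) xstar + (\<gamma> k)\<^sup>2 / 2 * (subgrad_bound k)\<^sup>2" for k
      using one_step s by simp
    show "k \<in> {Suc s..N} \<Longrightarrow> A k = A (k - 1) * (1 - a k)" for k
      unfolding A_def using s by (cases k) (auto simp: prod.cl_ivl_Suc)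
    show "k \<in> {s..N} \<Longrightarrow> 0 < A k" for k using A_pos s by auto
    have "1/2 * (norm (xstar - x (Suc N)))\<^sup>2 \<le> bregman \<omega> d\<omega> (x (Suc N)) xstar"
      using iterate_in N_pos xstar_in \<omega>_deriv
      by (intro bregman_ge_half_sq_dist[OF X_convex _ _ _ \<omega>_sc]) auto
    then show "0 \<le> bregman \<omega> d\<omega> (x (Suc N)) xstar"
      using zero_le_power2[of "norm (xstar - x (Suc N))"] by linarith
  qed
  moreover have "bregman \<omega> d\<omega> (x s) xstar \<le> (DX \<omega> d\<omega> X)\<^sup>2"
    using iterate_in s xstar_in V_bound by (intro bregman_le_DX_sq[OF X_compact, where C = "L / 2"]) auto
  then have "(1 - a s) * bregman \<omega> d\<omega> (x s) xstar / A s \<le> (1 - a s) * (DX \<omega> d\<omega> X)\<^sup>2 / A s"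
    using a_le_1[of s] A_pos[of s] s by (intro divide_right_mono mult_left_mono) auto
  moreover have "(\<Sum>k=s..N. (\<gamma> k)\<^sup>2 / 2 * (subgrad_bound k)\<^sup>2 / A k)
      = (\<Sum>k=s..N. 1/2 * (\<rho> k * \<gamma> k * (subgrad_bound k)\<^sup>2))"
    by (intro sum.cong) (simp_all add: \<rho>_def power2_eq_square)
  ultimately show ?thesis by linarith
qed

lemma productive_gap_sum_le:
  assumes s: "1 \<le> s" "s \<le> N"
    and A_pos: "\<And>k. k \<in> {1..N} \<Longrightarrow> 0 < A k" and a_le_1: "\<And>k. k \<in> {1..N} \<Longrightarrow> a k \<le> 1"
  defines "B \<equiv> {k \<in> {s..N}. productive k}"
  shows "(\<Sum>k\<in>B. \<rho> k * (f (x k) - f xstar)) + (\<Sum>k\<in>{s..N} - B. \<rho> k * \<eta> k)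
           \<le> (1 - a s) * (DX \<omega> d\<omega> X)\<^sup>2 / A s + 1/2 * (\<Sum>k\<in>B. \<rho> k * \<gamma> k * Lf\<^sup>2)
             + 1/2 * (\<Sum>k\<in>{s..N} - B. \<rho> k * \<gamma> k * LgX\<^sup>2)"
proof -
  have B: "B \<subseteq> {s..N}" unfolding B_def by auto
  have split: "(\<Sum>k=s..N. F k) = (\<Sum>k\<in>B. F k) + (\<Sum>k\<in>{s..N} - B. F k)" for F :: "nat \<Rightarrow> real"
    using sum.subset_diff[OF B] by (simp add: add.commute)
  have "(\<Sum>k\<in>B. \<rho> k * gap k) = (\<Sum>k\<in>B. \<rho> k * (f (x k) - f xstar))"
    unfolding gap_def B_def by (rule sum.cong) auto
  moreover have "(\<Sum>k\<in>{s..N} - B. \<rho> k * \<eta> k) \<le> (\<Sum>k\<in>{s..N} - B. \<rho> k * gap k)"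
  proof (rule sum_mono)
    fix k assume k: "k \<in> {s..N} - B"
    then have "\<not> productive k" "g xstar (\<delta> k) \<le> 0" "0 < \<rho> k"
      using s \<delta>_in cut_at_xstar \<gamma>_pos A_pos unfolding B_def \<rho>_def by auto
    then show "\<rho> k * \<eta> k \<le> \<rho> k * gap k"
      unfolding gap_def productive_def by (intro mult_left_mono) auto
  qed
  moreover have "(\<Sum>k=s..N. 1/2 * (\<rho> k * \<gamma> k * (subgrad_bound k)\<^sup>2))
      = 1/2 * (\<Sum>k\<in>B. \<rho> k * \<gamma> k * Lf\<^sup>2) + 1/2 * (\<Sum>k\<in>{s..N} - B. \<rho> k * \<gamma> k * LgX\<^sup>2)"
    unfolding split[of "\<lambda>k. 1/2 * (\<rho> k * \<gamma> k * (subgrad_bound k)\<^sup>2)"] sum_distrib_left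
    by (intro arg_cong2[where f = "(+)"] sum.cong) (auto simp: subgrad_bound_def B_def)
  ultimately show ?thesis
    using weighted_gap_sum_le[OF s A_pos a_le_1] split[of "\<lambda>k. \<rho> k * gap k"] by linarith
qed

theorem output_bounds:
  fixes s :: nat
  defines "I \<equiv> {s..N}" and "B \<equiv> {k \<in> {s..N}. productive k}"
    and "m \<equiv> nat \<lceil>real (N - s + 1) / 2\<rceil>"
  defines "xbar \<equiv> (1 / (\<Sum>k\<in>B. \<rho> k)) *\<^sub>R (\<Sum>k\<in>B. \<rho> k *\<^sub>R x k)"
    and "R \<equiv> (1 - a s) * (DX \<omega> d\<omega> X)\<^sup>2 / A s + 1/2 * (\<Sum>k\<in>B. \<rho> k * \<gamma> k * Lf\<^sup>2)
               + 1/2 * (\<Sum>k\<in>I - B. \<rho> k * \<gamma> k * LgX\<^sup>2)"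
  assumes s: "1 \<le> s" "s \<le> N"
    and A_pos: "\<And>k. k \<in> {1..N} \<Longrightarrow> 0 < A k" and a_le_1: "\<And>k. k \<in> {1..N} \<Longrightarrow> a k \<le> 1"
    and hyp: "R < min_subset_sum I m (\<lambda>k. \<rho> k * \<eta> k)"
  shows "f xbar - f xstar
           \<le> (2 * (1 - a s) * (DX \<omega> d\<omega> X)\<^sup>2 / A s + (\<Sum>k\<in>B. \<rho> k * \<gamma> k * Lf\<^sup>2)
               + (\<Sum>k\<in>I - B. \<rho> k * \<gamma> k * LgX\<^sup>2)) / (2 * min_subset_sum I m \<rho>)"
    and "Gmax g \<Delta> xbar
           \<le> (\<Sum>k\<in>B. \<rho> k * (\<eta> k + (Gmax g \<Delta> (x k) - g (x k) (\<delta> k)))) / (\<Sum>k\<in>B. \<rho> k)"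
proof -
  have I: "finite I" "I \<subseteq> {1..N}" "card I = N - s + 1" and B: "B \<subseteq> I"
    unfolding I_def B_def using s by auto
  have \<rho>_pos: "k \<in> I \<Longrightarrow> 0 < \<rho> k" for k
    unfolding \<rho>_def using \<gamma>_pos A_pos I by auto
  have "0 \<le> R"
    using a_le_1[of s] A_pos[of s] s \<rho>_pos \<gamma>_pos I B unfolding R_def
    by (intro add_nonneg_nonneg sum_nonneg mult_nonneg_nonneg divide_nonneg_pos) (auto simp: less_imp_le subset_iff)
  moreover have "1 \<le> m" "2 * m \<le> card I + 1"
    using nat_ceiling_half[of "N - s + 1"] I(3) unfolding m_def by auto
  moreover have "k \<in> I \<Longrightarrow> 0 < \<eta> k" for k using \<eta>_pos I by auto
  ultimately have B_ne: "B \<noteq> {}"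
    and gap: "(\<Sum>k\<in>B. \<rho> k * (f (x k) - f xstar)) / (\<Sum>k\<in>B. \<rho> k) \<le> R / min_subset_sum I m \<rho>"
    using weighted_average_bound[OF I(1) B _ _ \<rho>_pos _ _ hyp] productive_gap_sum_le[OF s A_pos a_le_1]
    unfolding R_def I_def B_def by auto
  have B_fin: "finite B" and \<rho>_B: "\<And>k. k \<in> B \<Longrightarrow> 0 < \<rho> k" and x_B: "\<And>k. k \<in> B \<Longrightarrow> x k \<in> X"
    using B I \<rho>_pos iterate_in finite_subset by (auto simp: subset_iff)
  have W_pos: "0 < (\<Sum>k\<in>B. \<rho> k)" using B_fin B_ne \<rho>_B by (intro sum_pos) auto
  have "(\<Sum>k\<in>B. \<rho> k * (f (x k) - f xstar)) / (\<Sum>k\<in>B. \<rho> k)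
      = (\<Sum>k\<in>B. \<rho> k * f (x k)) / (\<Sum>k\<in>B. \<rho> k) - f xstar"
    using W_pos by (simp add: right_diff_distrib sum_subtractf sum_distrib_right[symmetric] diff_divide_distrib)
  moreover have "f xbar \<le> (\<Sum>k\<in>B. \<rho> k * f (x k)) / (\<Sum>k\<in>B. \<rho> k)"
    unfolding xbar_def using \<rho>_B x_B by (intro convex_on_weighted_mean[OF f_convex B_fin B_ne]) auto
  ultimately show "f xbar - f xstar \<le> (2 * (1 - a s) * (DX \<omega> d\<omega> X)\<^sup>2 / A s + (\<Sum>k\<in>B. \<rho> k * \<gamma> k * Lf\<^sup>2)
               + (\<Sum>k\<in>I - B. \<rho> k * \<gamma> k * LgX\<^sup>2)) / (2 * min_subset_sum I m \<rho>)"
    using gap unfolding R_def by (simp add: field_simps)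
  have "convex_on X (Gmax g \<Delta>)"
    using \<delta>_in[of 1] N_pos g_cont g_convex by (intro convex_on_Gmax[OF X_convex \<Delta>_compact]) auto
  then have "Gmax g \<Delta> xbar \<le> (\<Sum>k\<in>B. \<rho> k * Gmax g \<Delta> (x k)) / (\<Sum>k\<in>B. \<rho> k)"
    unfolding xbar_def using \<rho>_B x_B by (intro convex_on_weighted_mean[OF _ B_fin B_ne]) auto
  also have "\<dots> \<le> (\<Sum>k\<in>B. \<rho> k * (\<eta> k + (Gmax g \<Delta> (x k) - g (x k) (\<delta> k)))) / (\<Sum>k\<in>B. \<rho> k)"
    using \<rho>_B W_pos unfolding B_def productive_def
    by (intro divide_right_mono sum_mono mult_left_mono) (auto intro: less_imp_le)
  finally show "Gmax g \<Delta> xbar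
      \<le> (\<Sum>k\<in>B. \<rho> k * (\<eta> k + (Gmax g \<Delta> (x k) - g (x k) (\<delta> k)))) / (\<Sum>k\<in>B. \<rho> k)" .
qed

end

theorem mainTheorem20:
  fixes X :: "'a::euclidean_space set" and \<Delta> :: "'b::euclidean_space set"
    and f :: "'a \<Rightarrow> real" and g :: "'a \<Rightarrow> 'b \<Rightarrow> real"
    and f' :: "'a \<Rightarrow> 'a" and g' :: "'a \<Rightarrow> 'b \<Rightarrow> 'a"
    and Lf LgX LgD :: real
    and \<omega> :: "'a \<Rightarrow> real" and d\<omega> :: "'a \<Rightarrow> 'a"
    and xstar :: 'a
    and N s :: nat and x :: "nat \<Rightarrow> 'a" and \<delta> :: "nat \<Rightarrow> 'b"
    and \<eta> \<gamma> :: "nat \<Rightarrow> real"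
    and \<mu>f \<mu>g L :: real
  defines "G \<equiv> Gmax g \<Delta>"
    and "V \<equiv> bregman \<omega> d\<omega>"
    and "D \<equiv> DX \<omega> d\<omega> X"
    and "I \<equiv> {s..N}"
    and "B \<equiv> {k \<in> {s..N}. g (x k) (\<delta> k) \<le> \<eta> k}"
    and "NN \<equiv> {s..N} - {k \<in> {s..N}. g (x k) (\<delta> k) \<le> \<eta> k}"
    and "a \<equiv> (\<lambda>k. if g (x k) (\<delta> k) \<le> \<eta> k then \<mu>f * \<gamma> k / L else \<mu>g * \<gamma> k / L)"
  defines "A \<equiv> (\<lambda>k. \<Prod>j\<in>{2..k}. (1 - a j))"
  defines "\<rho> \<equiv> (\<lambda>k. \<gamma> k / A k)"
    and "\<epsilon> \<equiv> (\<lambda>k. G (x k) - g (x k) (\<delta> k))"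
    and "m \<equiv> nat \<lceil>real (N - s + 1) / 2\<rceil>"
  assumes X_convex: "convex X" and X_compact: "compact X"
    and f_convex: "convex_on X f" and f_lip: "Lf-lipschitz_on X f"
    and D_compact: "compact \<Delta>"
    and g_convex: "\<And>d. d \<in> \<Delta> \<Longrightarrow> convex_on X (\<lambda>y. g y d)"
    and g_lipX: "\<And>d. d \<in> \<Delta> \<Longrightarrow> LgX-lipschitz_on X (\<lambda>y. g y d)"
    and g_lipD: "\<And>y. y \<in> X \<Longrightarrow> LgD-lipschitz_on \<Delta> (\<lambda>d. g y d)"
    and f'_sub: "\<And>y. y \<in> X \<Longrightarrow> is_subgrad f X y (f' y)"
    and g'_sub: "\<And>y d. y \<in> X \<Longrightarrow> d \<in> \<Delta> \<Longrightarrow> is_subgrad (\<lambda>z. g z d) X y (g' y d)"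
    and f'_bound: "\<And>y. y \<in> X \<Longrightarrow> norm (f' y) \<le> Lf"
    and g'_bound: "\<And>y d. y \<in> X \<Longrightarrow> d \<in> \<Delta> \<Longrightarrow> norm (g' y d) \<le> LgX"
    and xstar_opt: "xstar \<in> X" "G xstar \<le> 0" "\<And>y. y \<in> X \<Longrightarrow> G y \<le> 0 \<Longrightarrow> f xstar \<le> f y"
    and \<omega>_deriv: "\<And>y. y \<in> X \<Longrightarrow> (\<omega> has_derivative (\<lambda>h. d\<omega> y \<bullet> h)) (at y within X)"
    and \<omega>_C1: "continuous_on X d\<omega>"
    and \<omega>_sc: "strongly_convex_on 1 X \<omega>"
    and \<mu>f_pos: "\<mu>f > 0" and \<mu>g_pos: "\<mu>g > 0" and L_pos: "L > 0"
    and f_sc: "\<And>y z. y \<in> X \<Longrightarrow> z \<in> X \<Longrightarrow>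
                 f y \<ge> f z + f' z \<bullet> (y - z) + \<mu>f / 2 * (norm (y - z))\<^sup>2"
    and g_sc: "\<And>y z d. y \<in> X \<Longrightarrow> z \<in> X \<Longrightarrow> d \<in> \<Delta> \<Longrightarrow>
                 g y d \<ge> g z d + g' z d \<bullet> (y - z) + \<mu>g / 2 * (norm (y - z))\<^sup>2"
    and V_bound: "\<And>y z. y \<in> X \<Longrightarrow> z \<in> X \<Longrightarrow> V y z \<le> L / 2 * (norm (y - z))\<^sup>2"
    and N_pos: "1 \<le> N" and s_range: "1 \<le> s" "s \<le> N"
    and x1: "x 1 \<in> X"
    and \<delta>_in: "\<And>k. k \<in> {1..N} \<Longrightarrow> \<delta> k \<in> \<Delta>"
    and \<eta>_pos: "\<And>k. k \<in> {1..N} \<Longrightarrow> \<eta> k > 0"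
    and \<gamma>_pos: "\<And>k. k \<in> {1..N} \<Longrightarrow> \<gamma> k > 0"
    and step: "\<And>k. k \<in> {1..N} \<Longrightarrow>
       x (Suc k) = prox \<omega> d\<omega> X (x k)
         (\<gamma> k *\<^sub>R (if g (x k) (\<delta> k) \<le> \<eta> k then f' (x k) else g' (x k) (\<delta> k)))"
    and a_range: "\<And>k. k \<in> {1..N} \<Longrightarrow> 0 < a k \<and> a k \<le> 1"
    and A_pos: "\<And>k. k \<in> {1..N} \<Longrightarrow> A k > 0"
    and hyp: "min_subset_sum I m (\<lambda>k. \<rho> k * \<eta> k) >
       (1 - a s) * D\<^sup>2 / A s + 1/2 * (\<Sum>k\<in>B. \<rho> k * \<gamma> k * Lf\<^sup>2)
         + 1/2 * (\<Sum>k\<in>NN. \<rho> k * \<gamma> k * LgX\<^sup>2)"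
  shows "(f ((1 / (\<Sum>k\<in>B. \<rho> k)) *\<^sub>R (\<Sum>k\<in>B. \<rho> k *\<^sub>R x k)) - f xstar
           \<le> (2 * (1 - a s) * D\<^sup>2 / A s + (\<Sum>k\<in>B. \<rho> k * \<gamma> k * Lf\<^sup>2)
                + (\<Sum>k\<in>NN. \<rho> k * \<gamma> k * LgX\<^sup>2))
             / (2 * min_subset_sum I m \<rho>))
         \<and> (G ((1 / (\<Sum>k\<in>B. \<rho> k)) *\<^sub>R (\<Sum>k\<in>B. \<rho> k *\<^sub>R x k))
           \<le> (\<Sum>k\<in>B. \<rho> k * (\<eta> k + \<epsilon> k)) / (\<Sum>k\<in>B. \<rho> k))"
proof -
  interpret csa: inexact_csa X \<Delta> f g f' g' Lf LgX \<omega> d\<omega> xstar N x \<delta> \<eta> \<gamma> \<mu>f \<mu>g L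
  proof
    show "y \<in> X \<Longrightarrow> continuous_on \<Delta> (g y)" for y
      using g_lipD lipschitz_on_continuous_on by blast
    show "Gmax g \<Delta> xstar \<le> 0" using xstar_opt(2) unfolding G_def .
    show "y \<in> X \<Longrightarrow> z \<in> X \<Longrightarrow> bregman \<omega> d\<omega> y z \<le> L / 2 * (norm (y - z))\<^sup>2" for y z
      using V_bound unfolding V_def .
  qed (use assms in auto)
  have defs: "a = csa.a" "A = csa.A" "\<rho> = csa.\<rho>" "B = {k \<in> {s..N}. csa.productive k}" "NN = I - B"
    unfolding a_def A_def \<rho>_def B_def NN_def I_def csa.a_def csa.A_def csa.\<rho>_def csa.productive_def
    by (simp_all add: fun_eq_iff)
  have "k \<in> {1..N} \<Longrightarrow> 0 < csa.A k \<and> csa.a k \<le> 1" for k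
    using A_pos a_range unfolding defs by auto
  then show ?thesis
    using csa.output_bounds[OF s_range] hyp unfolding defs I_def m_def D_def G_def \<epsilon>_def by auto
qed

end
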